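(* Let $N,B,W,T$ be positive integers with $N\le B$, $B+1\le W$ and $T\ge B$, and set $T_{\mathrm{eff}}=\min(T,W-1)$. If a rate $R$ is achievable with delay $T$ over the channel $\mathcal{C}(N,B,W)$, then \[ \left(\frac{R}{1-R}\right)B+N\le T_{\mathrm{eff}}+1 . \]
   Context: Channel $\mathcal{C}(N,B,W)$: a packet erasure channel on a sequence of channel uses $i=0,1,2,\dots$ such that in every sliding window of $W$ consecutive channel uses, the set of erased positions is either a single burst of consecutive erasures of length at most $B$, or consists of at most $N$ erasures in arbitrary positions. Streaming code (equal source–channel rates): at each time $i\ge 0$ the encoder observes a source symbol $\mathbf{s}[i]\in\mathbb{F}_q^k$ and transmits $\mathbf{x}[i]=f_i(\mathbf{s}[0],\dots,\mathbf{s}[i])\in\mathbb{F}_q^n$; the channel output is $\mathbf{y}[i]=\mathbf{x}[i]$ or $\mathbf{y}[i]=\star$ (erasure). The code has delay $T$ if there are decoding functions with $\mathbf{s}[i]=g_i(\mathbf{y}[0],\dots,\mathbf{y}[i+T])$ for every $i\ge0$, every source sequence and every erasure pattern allowed by the channel. Its rate is $R=k/n$. A rate $R$ is achievable with delay $T$ over $\mathcal{C}(N,B,W)$ if such a streaming code of rate $R$ exists over some field size $q$. *)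

theory Defs
  imports Complex_Main
begin

text \<open>Erasure patterns are sets E of erased channel-use indices.\<close>
definition admissible_erasures :: "nat \<Rightarrow> nat \<Rightarrow> nat \<Rightarrow> nat set \<Rightarrow> bool" where
  "admissible_erasures N B W E \<longleftrightarrow>
     (\<forall>j. (\<exists>a l. l \<le> B \<and> E \<inter> {j..<j+W} = {a..<a+l}) \<or> card (E \<inter> {j..<j+W}) \<le> N)"

text \<open>Source symbols in F^k are lists of length k, channel symbols in F^n lists of length n.
  enc i [s0,...,si] = x[i]; dec i [y0,...,y(i+T)] = s[i]; erasure = None.\<close>
definition channel_output ::
  "(nat \<Rightarrow> 'f list list \<Rightarrow> 'f list) \<Rightarrow> (nat \<Rightarrow> 'f list) \<Rightarrow> nat set \<Rightarrow> nat \<Rightarrow> 'f list option" where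
  "channel_output enc s E t = (if t \<in> E then None else Some (enc t (map s [0..<Suc t])))"

definition is_streaming_code ::
  "nat \<Rightarrow> nat \<Rightarrow> nat \<Rightarrow> nat \<Rightarrow> nat \<Rightarrow> nat
   \<Rightarrow> (nat \<Rightarrow> 'f list list \<Rightarrow> 'f list) \<Rightarrow> (nat \<Rightarrow> 'f list option list \<Rightarrow> 'f list) \<Rightarrow> bool" where
  "is_streaming_code k n T N B W enc dec \<longleftrightarrow>
     (\<forall>s. (\<forall>i. length (s i) = k) \<longrightarrow>
        (\<forall>i. length (enc i (map s [0..<Suc i])) = n) \<and>
        (\<forall>E. admissible_erasures N B W E \<longrightarrow>
           (\<forall>i. dec i (map (channel_output enc s E) [0..<Suc (i+T)]) = s i)))"

definition achievable :: "('f::{finite,field}) itself \<Rightarrow> real \<Rightarrow> nat \<Rightarrow> nat \<Rightarrow> nat \<Rightarrow> nat \<Rightarrow> bool" where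
  "achievable _ R T N B W \<longleftrightarrow>
     (\<exists>k n (enc :: nat \<Rightarrow> 'f list list \<Rightarrow> 'f list) dec.
        n > 0 \<and> R = real k / real n \<and> is_streaming_code k n T N B W enc dec)"

end

theory Submission
  imports Defs
begin

text \<open>Erase the first B of every p channel uses, with period p = B + T_eff + 1 - N. Any window of
  at most T_eff + 1 uses meets this pattern either in a single burst of length at most B or in the
  end of one burst and the start of the next, which together have at most N erasures. Restricting
  the pattern to the decoding window {i..i+T} of s[i] therefore gives an admissible erasure pattern,
  so by induction on i all source symbols are determined by the unerased outputs. Over a horizon
  of M periods this compares k M p source symbols with at most n (M (p - B) + T) channel symbols;
  letting M grow gives k p \<le> n (p - B), which is the bound.\<close>

definition periodic_bursts :: "nat \<Rightarrow> nat \<Rightarrow> nat set" where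
  "periodic_bursts p B = {t. t mod p < B}"

lemma periodic_bursts_two_periods:
  assumes "B \<le> p"
  shows "periodic_bursts p B \<inter> {m*p..<m*p + 2*p} = {m*p..<m*p + B} \<union> {m*p + p..<m*p + p + B}"
proof (rule set_eqI)
  fix t
  show "t \<in> periodic_bursts p B \<inter> {m*p..<m*p + 2*p} \<longleftrightarrow> t \<in> {m*p..<m*p + B} \<union> {m*p + p..<m*p + p + B}"
  proof (cases "m*p \<le> t \<and> t < m*p + 2*p")
    case True
    then obtain r where t: "t = m*p + r" and r: "r < 2*p" using le_Suc_ex by force
    have "t mod p = (if r < p then r else r - p)"
      using r by (auto simp: t le_mod_geq)
    then show ?thesis using t assms by (auto simp: periodic_bursts_def)
  qed (use assms in auto)
qed

lemma periodic_bursts_window: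
  assumes "N \<le> B" "B < p" "b \<le> a + (p - B) + N"
  shows "(\<exists>c l. l \<le> B \<and> periodic_bursts p B \<inter> {a..<b} = {c..<c+l})
    \<or> card (periodic_bursts p B \<inter> {a..<b}) \<le> N"
proof -
  obtain m r where a: "a = m*p + r" and r: "r < p"
    using div_mult_mod_eq[of a p] mod_less_divisor[of p a] assms(2) by (metis gr_zeroI not_less0)
  define c where "c = m * p"
  have c: "c \<le> a" "a < c + p" using a r unfolding c_def by simp_all
  have sub: "{a..<b} \<subseteq> {c..<c + 2*p}" using c assms by auto
  have two: "periodic_bursts p B \<inter> {c..<c + 2*p} = {c..<c+B} \<union> {c+p..<c+p+B}"
    unfolding c_def using assms(2) by (intro periodic_bursts_two_periods) simp
  have window: "periodic_bursts p B \<inter> {a..<b} = ({c..<c+B} \<union> {c+p..<c+p+B}) \<inter> {a..<b}"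
    unfolding two[symmetric] using sub by blast
  consider (first) "b \<le> c + p" | (second) "c + B \<le> a" | (both) "a < c + B" "c + p < b"
    by linarith
  then show ?thesis
  proof cases
    case first
    then have "periodic_bursts p B \<inter> {a..<b} = {a..<a + (min b (c+B) - a)}"
      unfolding window using c by auto
    moreover have "min b (c+B) - a \<le> B" using c by linarith
    ultimately show ?thesis by blast
  next
    case second
    then have "periodic_bursts p B \<inter> {a..<b} = {c+p..<c+p + (min b (c+p+B) - (c+p))}"
      unfolding window using c by auto
    moreover have "min b (c+p+B) - (c+p) \<le> B" by linarith
    ultimately show ?thesis by blast
  next
    case both
    have "b \<le> c + p + B" using both assms by linarith
    then have "periodic_bursts p B \<inter> {a..<b} = {a..<c+B} \<union> {c+p..<b}"
      unfolding window using both c assms(2) by auto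
    then have "card (periodic_bursts p B \<inter> {a..<b}) \<le> card {a..<c+B} + card {c+p..<b}"
      by (metis card_Un_le)
    also have "\<dots> \<le> N" using both assms by simp
    finally show ?thesis ..
  qed
qed

lemma admissible_periodic_bursts_segment:
  assumes "N \<le> B" "B < p" "min (T + 1) W \<le> p - B + N"
  shows "admissible_erasures N B W (periodic_bursts p B \<inter> {i..i+T})"
  unfolding admissible_erasures_def
proof
  fix j
  have "periodic_bursts p B \<inter> {i..i+T} \<inter> {j..<j+W}
      = periodic_bursts p B \<inter> {max i j..<min (i+T+1) (j+W)}" by auto
  moreover have "min (i+T+1) (j+W) \<le> max i j + (p - B) + N" using assms(3) by auto
  ultimately show "(\<exists>a l. l \<le> B \<and> periodic_bursts p B \<inter> {i..i+T} \<inter> {j..<j+W} = {a..<a+l})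
      \<or> card (periodic_bursts p B \<inter> {i..i+T} \<inter> {j..<j+W}) \<le> N"
    using periodic_bursts_window[OF assms(1,2)] by presburger
qed

lemma length_filter_not_periodic_bursts_periods:
  assumes "B \<le> p"
  shows "length (filter (\<lambda>t. t \<notin> periodic_bursts p B) [0..<M*p]) = M * (p - B)"
proof (induction M)
  case (Suc M)
  have "[M*p..<M*p + p] = map (\<lambda>r. r + M*p) [0..<p]" by (simp add: map_add_upt add.commute)
  then have "filter (\<lambda>t. t \<notin> periodic_bursts p B) [M*p..<M*p + p]
      = map (\<lambda>r. r + M*p) (filter (\<lambda>r. B \<le> r) [0..<p])"
    by (auto simp: filter_map periodic_bursts_def intro: filter_cong)
  also have "filter (\<lambda>r. B \<le> r) [0..<p] = [B..<p]"
    using assms by (induction p) auto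
  finally have "length (filter (\<lambda>t. t \<notin> periodic_bursts p B) [M*p..<M*p + p]) = p - B" by simp
  moreover have "[0..<Suc M * p] = [0..<M*p] @ [M*p..<M*p + p]"
    using upt_add_eq_append[of 0 "M*p" p] by (simp add: add.commute)
  ultimately show ?case using Suc.IH by simp
qed simp

lemma length_filter_not_periodic_bursts:
  assumes "B \<le> p"
  shows "length (filter (\<lambda>t. t \<notin> periodic_bursts p B) [0..<M*p + T]) \<le> M * (p - B) + T"
proof -
  have "[0..<M*p + T] = [0..<M*p] @ [M*p..<M*p + T]" by (rule upt_add_eq_append) simp
  moreover have "length (filter (\<lambda>t. t \<notin> periodic_bursts p B) [M*p..<M*p + T]) \<le> T"
    using length_filter_le[of _ "[M*p..<M*p + T]"] by simp
  ultimately show ?thesis using length_filter_not_periodic_bursts_periods[OF assms, of M] by simp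
qed

lemma streaming_code_sources_eq:
  assumes code: "is_streaming_code k n T N B W enc dec"
    and len: "\<forall>i. length (s i) = k" "\<forall>i. length (s' i) = k"
    and recover: "\<And>i. i < L \<Longrightarrow>
      \<exists>E. admissible_erasures N B W E \<and> (\<forall>t\<in>{i..i+T}. t \<notin> E \<longrightarrow> t \<in> Obs)"
    and observed: "\<And>t. t \<in> Obs \<Longrightarrow> enc t (map s [0..<Suc t]) = enc t (map s' [0..<Suc t])"
    and "i < L"
  shows "s i = s' i"
  using \<open>i < L\<close>
proof (induction i rule: less_induct)
  case (less i)
  obtain E where E: "admissible_erasures N B W E" and obs: "\<forall>t\<in>{i..i+T}. t \<notin> E \<longrightarrow> t \<in> Obs"
    using recover[OF less.prems] by blast
  have "channel_output enc s E t = channel_output enc s' E t" if "t \<le> i + T" for t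
  proof (cases "t \<notin> E \<and> t < i")
    case True
    then have "map s [0..<Suc t] = map s' [0..<Suc t]" using less by auto
    then show ?thesis by (simp only: channel_output_def)
  qed (use that obs observed in \<open>auto simp: channel_output_def\<close>)
  then have "map (channel_output enc s E) [0..<Suc (i+T)] = map (channel_output enc s' E) [0..<Suc (i+T)]"
    by simp
  then show ?case
    using code len E unfolding is_streaming_code_def by metis
qed

lemma card_vector_lists:
  "card {xs. set xs \<subseteq> {v :: 'f::finite list. length v = k} \<and> length xs = L}
    = card (UNIV :: 'f set) ^ (k * L)"
proof -
  have "finite {v :: 'f list. length v = k}" "card {v :: 'f list. length v = k} = card (UNIV :: 'f set) ^ k"
    using finite_lists_length_eq[of "UNIV :: 'f set" k] card_lists_length_eq[of "UNIV :: 'f set" k]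
    by simp_all
  then show ?thesis by (simp add: card_lists_length_eq power_mult)
qed

text \<open>The alphabet needs a 0 to pad a list of L source symbols to a source sequence, and
  0 \<noteq> 1 so that counting codewords bounds exponents.\<close>
lemma streaming_code_source_le_observed:
  fixes enc :: "nat \<Rightarrow> ('f::{finite,zero_neq_one}) list list \<Rightarrow> 'f list"
  assumes code: "is_streaming_code k n T N B W enc dec"
    and recover: "\<And>i. i < L \<Longrightarrow>
      \<exists>E. admissible_erasures N B W E \<and> (\<forall>t\<in>{i..i+T}. t \<notin> E \<longrightarrow> t \<in> set ts)"
  shows "k * L \<le> n * length ts"
proof -
  define A where "A = {xs. set xs \<subseteq> {v :: 'f list. length v = k} \<and> length xs = L}"
  define D where "D = {ys. set ys \<subseteq> {v :: 'f list. length v = n} \<and> length ys = length ts}"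
  define ext where "ext xs i = (if i < L then xs ! i else replicate k 0)" for xs :: "'f list list" and i
  define \<Phi> where "\<Phi> xs = map (\<lambda>t. enc t (map (ext xs) [0..<Suc t])) ts" for xs
  have ext_len: "\<forall>i. length (ext xs i) = k" if "xs \<in> A" for xs
    using that unfolding A_def ext_def by (auto dest: nth_mem)
  have "\<Phi> ` A \<subseteq> D"
    using code ext_len unfolding D_def \<Phi>_def is_streaming_code_def by auto
  moreover have "inj_on \<Phi> A"
  proof (rule inj_onI)
    fix xs ys assume xs: "xs \<in> A" and ys: "ys \<in> A" and "\<Phi> xs = \<Phi> ys"
    then have "\<And>t. t \<in> set ts \<Longrightarrow>
        enc t (map (ext xs) [0..<Suc t]) = enc t (map (ext ys) [0..<Suc t])"
      unfolding \<Phi>_def by auto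
    then have "\<And>i. i < L \<Longrightarrow> ext xs i = ext ys i"
      using streaming_code_sources_eq[OF code ext_len[OF xs] ext_len[OF ys] recover] by blast
    with xs ys show "xs = ys"
      unfolding A_def ext_def by (auto intro: nth_equalityI)
  qed
  moreover have "finite {v :: 'f list. length v = n}"
    using finite_lists_length_eq[of "UNIV :: 'f set" n] by simp
  then have "finite D" unfolding D_def by (simp add: finite_lists_length_eq)
  ultimately have "card A \<le> card D" by (metis card_inj_on_le)
  then have "card (UNIV :: 'f set) ^ (k * L) \<le> card (UNIV :: 'f set) ^ (n * length ts)"
    unfolding A_def D_def card_vector_lists .
  moreover have "1 < card (UNIV :: 'f set)"
    using card_mono[of UNIV "{0 :: 'f, 1}"] by simp
  ultimately show ?thesis using power_le_imp_le_exp by blast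
qed

lemma le_of_mult_le_mult_add:
  fixes a b c :: nat
  assumes "\<And>M. M * a \<le> M * b + c"
  shows "a \<le> b"
proof (rule ccontr)
  assume "\<not> a \<le> b"
  then have "(c + 1) * (b + 1) \<le> (c + 1) * b + c"
    using assms[of "c + 1"] mult_le_mono2[of "b + 1" a "c + 1"] by linarith
  then show False by simp
qed

lemma streaming_code_periodic_bound:
  fixes enc :: "nat \<Rightarrow> ('f::{finite,zero_neq_one}) list list \<Rightarrow> 'f list"
  assumes code: "is_streaming_code k n T N B W enc dec"
    and "N \<le> B" "B < p" "min (T + 1) W \<le> p - B + N"
  shows "k * p \<le> n * (p - B)"
proof (rule le_of_mult_le_mult_add)
  fix M
  let ?ts = "filter (\<lambda>t. t \<notin> periodic_bursts p B) [0..<M*p + T]"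
  have "k * (M*p) \<le> n * length ?ts"
  proof (rule streaming_code_source_le_observed[OF code])
    fix i assume "i < M*p"
    then have "\<forall>t\<in>{i..i+T}. t \<notin> periodic_bursts p B \<inter> {i..i+T} \<longrightarrow> t \<in> set ?ts"
      by auto
    then show "\<exists>E. admissible_erasures N B W E \<and> (\<forall>t\<in>{i..i+T}. t \<notin> E \<longrightarrow> t \<in> set ?ts)"
      using admissible_periodic_bursts_segment[OF assms(2-4)] by blast
  qed
  also have "\<dots> \<le> n * (M * (p - B) + T)"
    using length_filter_not_periodic_bursts[of B p M T] assms(3) by simp
  finally show "M * (k * p) \<le> M * (n * (p - B)) + n * T"
    by (simp add: algebra_simps)
qed

lemma rate_ratio_le:
  assumes "k * (B + g) \<le> n * g" "0 < n"
  shows "real k / real n / (1 - real k / real n) * real B \<le> real g"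
proof (cases "k < n")
  case True
  have "k * B \<le> (n - k) * g" using assms(1) by (simp add: algebra_simps diff_mult_distrib)
  then have "real k * real B \<le> real (n - k) * real g" by (metis of_nat_le_iff of_nat_mult)
  moreover have "real k / real n / (1 - real k / real n) = real k / real (n - k)"
    using True assms(2) by (simp add: field_simps of_nat_diff)
  ultimately show ?thesis using True by (simp add: field_simps)
next
  case False
  then have "1 \<le> real k / real n" using assms(2) by simp
  then have "real k / real n / (1 - real k / real n) \<le> 0" by (intro divide_nonneg_nonpos) simp_all
  from mult_nonpos_nonneg[OF this, of "real B"] show ?thesis by linarith
qed

theorem theorem1:
  fixes N B W T :: nat and R :: real
  assumes "0 < N" "0 < B" "0 < W" "0 < T"
    and "N \<le> B" "B + 1 \<le> W" "T \<ge> B"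
    and "achievable TYPE('f::{finite,field}) R T N B W"
  shows "(R / (1 - R)) * real B + real N \<le> real (min T (W - 1)) + 1"
proof -
  obtain k n and enc :: "nat \<Rightarrow> 'f list list \<Rightarrow> 'f list" and dec where
    "0 < n" and R: "R = real k / real n" and code: "is_streaming_code k n T N B W enc dec"
    using assms(8) unfolding achievable_def by blast
  define g where "g = min T (W - 1) + 1 - N"
  have g: "real g = real (min T (W - 1)) + 1 - real N" "0 < g"
    using assms unfolding g_def by auto
  have "k * (B + g) \<le> n * (B + g - B)"
    using streaming_code_periodic_bound[OF code \<open>N \<le> B\<close>, of "B + g"] g(2) assms(3,5)
    unfolding g_def by fastforce
  then have "R / (1 - R) * real B \<le> real g"
    using rate_ratio_le[OF _ \<open>0 < n\<close>] unfolding R by simp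
  then show ?thesis using g(1) by simp
qed

end
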